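(* Let $a,b$ be integers with $0<b<a$, let $S=\langle a,a+1,\ldots,a+b\rangle$ with conductor $c$, and let $m\ge 2c-1$. Let $r$ be a positive integer, let $\mathrm h(r)$ be the unique integer $q$ with $q+\frac12 bq(q-1)\le r<1+q+\frac12 bq(q+1)$, and write $r=\mathrm h(r)+\frac12 b\mathrm h(r)(\mathrm h(r)-1)+k\mathrm h(r)+j$ with integers $-1\le k\le b-1$ and $0<j\le\mathrm h(r)$ (with $k=-1$ only when $r=\mathrm h(r)+\frac12 b\mathrm h(r)(\mathrm h(r)-1)$, and then $j=\mathrm h(r)$). If $M$ is an ordered $(S,m,r)$-amenable set, then $\sharp(M\cap[m,m+a+b))=(\mathrm h(r)-1)b+k+2$.
   Context: For $x\in S$, $\mathrm D(x)=\{\alpha\in S\mid x-\alpha\in S\}$. A set $M=\{m_1<\cdots<m_r\}\subseteq S$ with $2c-1\le m=m_1$ is $(S,m,r)$-amenable if $\mathrm D(m_i)\cap[m,\infty)\subseteq M$ for all $i$. The ground is $\{m,m+1,\ldots,m+a+b-1\}$, and the shadow of $M$ is $M\cap\{m,\ldots,m+a+b-1\}$. For a finite $M\subseteq S\cap[m,\infty)$, let $J$ be the set of $j\in\{0,\ldots,a-1\}$ such that $x-(m+b)=qa+j$ for some $x\in M$ and some integer $q\ge 0$; if $J\neq\emptyset$ let $j_0=\max J$ and let the wagon of $M$ be $W=\{x\in M\mid x-(m+b)=qa+j_0\text{ for some integer }q\}$. An element $P\in M$ is the pivot of $M$ if either $P<m+b$ and $P=\max M$, or $P=\max W$. An $(S,m,r)$-amenable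 set $M$ with pivot $P$ is ordered amenable if (i) its shadow is $\{m,m+1,\ldots,m+t\}$ for some integer $0\le t<a+b-1$, and (ii) whenever $s\in S\setminus M$ is such that $M\cup\{s\}$ is $(S,m,r+1)$-amenable with the same shadow as $M$, we have $s=P+a$. *)

theory Defs
  imports Main
begin

inductive_set gen_semigroup :: "nat set \<Rightarrow> nat set" for G where
  zero: "0 \<in> gen_semigroup G"
| add: "x \<in> gen_semigroup G \<Longrightarrow> g \<in> G \<Longrightarrow> x + g \<in> gen_semigroup G"

definition Ssg :: "nat \<Rightarrow> nat \<Rightarrow> nat set" where
  "Ssg a b = gen_semigroup {a..a+b}"

definition conductor :: "nat set \<Rightarrow> nat" where
  "conductor S = (LEAST c. \<forall>n\<ge>c. n \<in> S)"

definition Dset :: "nat set \<Rightarrow> nat \<Rightarrow> nat set" where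
  "Dset S x = {\<alpha> \<in> S. \<alpha> \<le> x \<and> x - \<alpha> \<in> S}"

definition amenable :: "nat set \<Rightarrow> nat \<Rightarrow> nat \<Rightarrow> nat set \<Rightarrow> bool" where
  "amenable S m r M \<longleftrightarrow>
     finite M \<and> card M = r \<and> M \<subseteq> S \<and> m \<in> M \<and> (\<forall>x\<in>M. m \<le> x) \<and>
     2 * conductor S \<le> m + 1 \<and>
     (\<forall>x\<in>M. \<forall>\<alpha>\<in>Dset S x. m \<le> \<alpha> \<longrightarrow> \<alpha> \<in> M)"

definition shadow :: "nat \<Rightarrow> nat \<Rightarrow> nat \<Rightarrow> nat set \<Rightarrow> nat set" where
  "shadow a b m M = M \<inter> {m..<m+a+b}"

definition wagonJ :: "nat \<Rightarrow> nat \<Rightarrow> nat \<Rightarrow> nat set \<Rightarrow> nat set" where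
  "wagonJ a b m M = {j. j < a \<and> (\<exists>x\<in>M. \<exists>q::nat. x = m + b + q * a + j)}"

definition wagon :: "nat \<Rightarrow> nat \<Rightarrow> nat \<Rightarrow> nat set \<Rightarrow> nat set" where
  "wagon a b m M = {x \<in> M. \<exists>q::int. int x - int (m + b) = q * int a + int (Max (wagonJ a b m M))}"

definition is_pivot :: "nat \<Rightarrow> nat \<Rightarrow> nat \<Rightarrow> nat set \<Rightarrow> nat \<Rightarrow> bool" where
  "is_pivot a b m M P \<longleftrightarrow> P \<in> M \<and>
     ((P < m + b \<and> P = Max M) \<or>
      (wagonJ a b m M \<noteq> {} \<and> P = Max (wagon a b m M)))"

definition ordered_amenable :: "nat \<Rightarrow> nat \<Rightarrow> nat set \<Rightarrow> nat \<Rightarrow> nat \<Rightarrow> nat set \<Rightarrow> bool" where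
  "ordered_amenable a b S m r M \<longleftrightarrow>
     amenable S m r M \<and>
     (\<exists>P. is_pivot a b m M P \<and>
        (\<exists>t. t + 1 < a + b \<and> shadow a b m M = {m..m+t}) \<and>
        (\<forall>s \<in> S - M. amenable S m (r + 1) (insert s M) \<and>
             shadow a b m (insert s M) = shadow a b m M \<longrightarrow> s = P + a))"

definition hfun :: "nat \<Rightarrow> nat \<Rightarrow> int" where
  "hfun b r = (THE q::int. q + int b * q * (q - 1) div 2 \<le> int r \<and>
                           int r < 1 + q + int b * q * (q + 1) div 2)"

end

theory Submission
  imports Defs
begin

text \<open>Translate by \<open>m\<close> and let \<open>T\<^sub>n\<close> be the staircase of intervals \<open>[q(a+b), qa+n)\<close>, \<open>q \<ge> 0\<close>.
  If the shadow of \<open>M\<close> is \<open>{m..m+t}\<close>, closure of an amenable set under subtracting the generators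
  \<open>a, \<dots>, a+b\<close> gives \<open>M - m \<subseteq> T\<^sub>t\<^sub>+\<^sub>1\<close>. Conversely \<open>T\<^sub>t \<subseteq> M - m\<close>: the least missing element of
  \<open>T\<^sub>t\<close> could be added to \<open>M\<close> without changing the shadow, so ordered amenability makes it \<open>P + a\<close>,
  which is impossible because it lies in a residue class modulo \<open>a\<close> strictly below that of the wagon.
  Since \<open>#T\<^sub>n = \<Sum>\<^sub>c\<^sub><\<^sub>n (\<lfloor>c/b\<rfloor> + 1)\<close> for \<open>n \<le> a + b\<close>, the size \<open>r\<close> of \<open>M\<close> lies strictly above this
  count at \<open>t\<close> and at most at \<open>t + 1\<close>, which determines \<open>t\<close> in terms of \<open>h(r)\<close>, \<open>k\<close> and \<open>j\<close>.\<close>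

section \<open>The semigroup \<open>\<langle>a, \<dots>, a + b\<rangle>\<close> and its amenable sets\<close>

lemma mem_Ssg_iff: "n \<in> Ssg a b \<longleftrightarrow> (\<exists>p. p * a \<le> n \<and> n \<le> p * (a + b))"
proof
  assume "n \<in> Ssg a b"
  then show "\<exists>p. p * a \<le> n \<and> n \<le> p * (a + b)"
    unfolding Ssg_def
  proof induction
    case zero
    then show ?case by auto
  next
    case (add x g)
    then obtain p where "p * a \<le> x" "x \<le> p * (a + b)" by auto
    with add have "Suc p * a \<le> x + g" "x + g \<le> Suc p * (a + b)" by auto
    then show ?case by blast
  qed
next
  assume "\<exists>p. p * a \<le> n \<and> n \<le> p * (a + b)"
  then obtain p where "p * a \<le> n" "n \<le> p * (a + b)" by auto
  then show "n \<in> Ssg a b"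
  proof (induction p arbitrary: n)
    case 0
    then show ?case by (simp add: Ssg_def gen_semigroup.zero)
  next
    case (Suc p)
    define g where "g = a + min b (n - Suc p * a)"
    have g: "g \<in> {a..a + b}" unfolding g_def by auto
    have "n - g \<in> Ssg a b"
      using Suc unfolding g_def by (intro Suc.IH) (auto simp: min_def algebra_simps)
    moreover have "n = (n - g) + g" using Suc.prems unfolding g_def by (auto simp: min_def)
    ultimately show ?case using g unfolding Ssg_def by (metis gen_semigroup.add)
  qed
qed

lemma Ssg_ge_conductor:
  assumes "0 < a" "0 < b" "conductor (Ssg a b) \<le> n"
  shows "n \<in> Ssg a b"
proof -
  have "\<forall>n \<ge> a * a. n \<in> Ssg a b"
  proof (intro allI impI)
    fix n assume n: "a * a \<le> n"
    define p where "p = n div a"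
    have "p * a \<le> n" unfolding p_def by (metis div_mult_mod_eq le_add1)
    have "a \<le> p" unfolding p_def using n assms(1) by (metis div_le_mono nonzero_mult_div_cancel_right not_gr0)
    with assms(2) have "a \<le> p * b" by (metis le_trans mult.right_neutral mult_le_mono2 Suc_leI One_nat_def)
    moreover have "n = p * a + n mod a" unfolding p_def by simp
    moreover have "n mod a < a" using assms(1) by simp
    ultimately have "n \<le> p * (a + b)" by (simp add: algebra_simps)
    with \<open>p * a \<le> n\<close> show "n \<in> Ssg a b" by (auto simp: mem_Ssg_iff)
  qed
  then have "\<forall>n \<ge> conductor (Ssg a b). n \<in> Ssg a b" unfolding conductor_def by (rule LeastI)
  with assms(3) show ?thesis by blast
qed

lemma amenableD:
  assumes "amenable S m r M"
  shows "finite M" "card M = r" "M \<subseteq> S" "m \<in> M" "x \<in> M \<Longrightarrow> m \<le> x"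
    and "2 * conductor S \<le> m + 1"
    and "x \<in> M \<Longrightarrow> \<alpha> \<in> Dset S x \<Longrightarrow> m \<le> \<alpha> \<Longrightarrow> \<alpha> \<in> M"
  using assms unfolding amenable_def by blast+

lemma amenable_Ssg_above:
  assumes "0 < a" "0 < b" "amenable (Ssg a b) m r M" "m \<le> n"
  shows "n \<in> Ssg a b"
  using assms(1,2,4) amenableD(6)[OF assms(3)] by (intro Ssg_ge_conductor) auto

lemma amenable_Ssg_closed:
  assumes "0 < a" "0 < b" "amenable (Ssg a b) m r M"
    and "x \<in> M" "m \<le> \<alpha>" "\<alpha> \<le> x" "x - \<alpha> \<in> Ssg a b"
  shows "\<alpha> \<in> M"
proof -
  have "\<alpha> \<in> Dset (Ssg a b) x"
    using assms(6,7) amenable_Ssg_above[OF assms(1-3,5)] unfolding Dset_def by simp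
  with assms(4,5) show ?thesis using amenableD(7)[OF assms(3)] by blast
qed

section \<open>Staircases\<close>

definition staircase :: "nat \<Rightarrow> nat \<Rightarrow> nat \<Rightarrow> nat set" where
  "staircase a b n = {x. \<exists>q. q * (a + b) \<le> x \<and> x < q * a + n}"

lemma staircase_corner_notin:
  assumes "n < a + b"
  shows "q * a + n \<notin> staircase a b n"
proof
  assume "q * a + n \<in> staircase a b n"
  then obtain q' where q': "q' * (a + b) \<le> q * a + n" "q * a + n < q' * a + n"
    unfolding staircase_def by auto
  then have "q < q'" by simp
  then have "Suc q * (a + b) \<le> q' * (a + b)" by (meson Suc_leI mult_le_mono1)
  moreover have "q * a + n < Suc q * (a + b)" using assms by (simp add: algebra_simps)
  ultimately show False using q'(1) by linarith
qed

lemma staircase_diff_mem: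
  assumes "y \<in> staircase a b n" "d \<in> Ssg a b" "d \<le> y"
  shows "y - d \<in> staircase a b n"
proof -
  obtain q where q: "q * (a + b) \<le> y" "y < q * a + n" using assms(1) unfolding staircase_def by auto
  obtain p where p: "p * a \<le> d" "d \<le> p * (a + b)" using assms(2) by (auto simp: mem_Ssg_iff)
  show ?thesis
  proof (cases "p \<le> q")
    case True
    then obtain e where "q = p + e" using le_Suc_ex by blast
    with q p assms(3) have "e * (a + b) \<le> y - d \<and> y - d < e * a + n" by (auto simp: algebra_simps)
    then show ?thesis unfolding staircase_def by blast
  next
    case False
    then have "q * a \<le> p * a" by simp
    with q p assms(3) have "0 * (a + b) \<le> y - d \<and> y - d < 0 * a + n" by linarith
    then show ?thesis unfolding staircase_def by blast
  qed
qed

lemma staircase_if_diffs_mem: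
  assumes "n < a + b" "a + b \<le> y"
    and diffs: "\<And>g. a \<le> g \<Longrightarrow> g \<le> a + b \<Longrightarrow> y - g \<in> staircase a b n"
  shows "y \<in> staircase a b n"
proof -
  obtain q where q: "q * (a + b) \<le> y - (a + b)" "y - (a + b) < q * a + n"
    using diffs[of "a + b"] unfolding staircase_def by auto
  have "y - a < q * a + n"
  proof (rule ccontr)
    assume "\<not> y - a < q * a + n"
    then have "y - (y - (q * a + n)) \<in> staircase a b n" using q by (intro diffs) auto
    moreover have "y - (y - (q * a + n)) = q * a + n" using \<open>\<not> y - a < q * a + n\<close> by simp
    ultimately show False using staircase_corner_notin[OF assms(1)] by simp
  qed
  with q assms(2) have "Suc q * (a + b) \<le> y \<and> y < Suc q * a + n" by auto
  then show ?thesis unfolding staircase_def by blast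
qed

lemma finite_staircase:
  assumes "0 < b"
  shows "finite (staircase a b n)"
proof (rule finite_subset)
  show "staircase a b n \<subseteq> {..< n * a + n}"
  proof
    fix x assume "x \<in> staircase a b n"
    then obtain q where q: "q * (a + b) \<le> x" "x < q * a + n" unfolding staircase_def by auto
    then have "q * b < n" by (simp add: algebra_simps)
    moreover have "q \<le> q * b" using assms by simp
    ultimately have "q \<le> n" by linarith
    then have "q * a \<le> n * a" by (rule mult_le_mono1)
    with q(2) show "x \<in> {..< n * a + n}" unfolding lessThan_iff by linarith
  qed
qed simp

definition stair_sum :: "nat \<Rightarrow> nat \<Rightarrow> nat" where
  "stair_sum b n = (\<Sum>c<n. c div b + 1)"

lemma stair_sum_Suc [simp]: "stair_sum b (Suc n) = stair_sum b n + (n div b + 1)"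
  by (simp add: stair_sum_def)

lemma staircase_Suc:
  assumes "0 < b"
  shows "staircase a b (Suc n) = staircase a b n \<union> (\<lambda>q. q * a + n) ` {..n div b}"
proof (intro equalityI subsetI)
  fix x assume "x \<in> staircase a b (Suc n)"
  then obtain q where q: "q * (a + b) \<le> x" "x < q * a + Suc n" unfolding staircase_def by auto
  show "x \<in> staircase a b n \<union> (\<lambda>q. q * a + n) ` {..n div b}"
  proof (cases "x < q * a + n")
    case True
    with q show ?thesis unfolding staircase_def by auto
  next
    case False
    with q have x: "x = q * a + n" by simp
    with q assms have "q \<le> n div b" by (simp add: algebra_simps less_eq_div_iff_mult_less_eq)
    with x show ?thesis by blast
  qed
next
  fix x assume "x \<in> staircase a b n \<union> (\<lambda>q. q * a + n) ` {..n div b}"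
  then show "x \<in> staircase a b (Suc n)"
  proof
    assume "x \<in> staircase a b n"
    then show ?thesis unfolding staircase_def by force
  next
    assume "x \<in> (\<lambda>q. q * a + n) ` {..n div b}"
    then obtain q where x: "x = q * a + n" "q \<le> n div b" by auto
    with assms have "q * (a + b) \<le> x \<and> x < q * a + Suc n"
      by (auto simp: algebra_simps less_eq_div_iff_mult_less_eq)
    then show ?thesis unfolding staircase_def by blast
  qed
qed

lemma card_staircase_Suc:
  assumes "0 < a" "0 < b" "n < a + b"
  shows "card (staircase a b (Suc n)) = card (staircase a b n) + (n div b + 1)"
proof -
  have "staircase a b n \<inter> (\<lambda>q. q * a + n) ` {..n div b} = {}"
    using staircase_corner_notin[OF assms(3)] by auto
  moreover have "card ((\<lambda>q. q * a + n) ` {..n div b}) = n div b + 1"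
    using assms(1) by (subst card_image) (auto simp: inj_on_def)
  ultimately show ?thesis
    using finite_staircase[OF assms(2)] by (simp add: staircase_Suc[OF assms(2)] card_Un_disjoint)
qed

lemma card_staircase:
  assumes "0 < a" "0 < b" "n \<le> a + b"
  shows "card (staircase a b n) = stair_sum b n"
  using assms(3)
proof (induction n)
  case 0
  have "staircase a b 0 = {}" unfolding staircase_def by (auto simp: algebra_simps)
  then show ?case by (simp add: stair_sum_def)
next
  case (Suc n)
  then show ?case using card_staircase_Suc[OF assms(1,2)] by simp
qed

lemma strict_mono_stair_sum: "strict_mono (stair_sum b)"
  unfolding strict_mono_Suc_iff by simp

lemma stair_sum_add:
  assumes "0 < b" "e \<le> b"
  shows "stair_sum b (h * b + e) = stair_sum b (h * b) + e * (h + 1)"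
  using assms(2)
proof (induction e)
  case (Suc e)
  with assms(1) have "(h * b + e) div b = h" by (simp add: div_add1_eq)
  with Suc show ?case by simp
qed simp

lemma stair_sum_mult:
  assumes "0 < b"
  shows "2 * stair_sum b (h * b) = b * h * (h + 1)"
proof (induction h)
  case (Suc h)
  have "stair_sum b (Suc h * b) = stair_sum b (h * b) + b * (h + 1)"
    using stair_sum_add[OF assms, of b h] by (simp add: algebra_simps)
  with Suc show ?case by (simp add: algebra_simps)
qed (simp add: stair_sum_def)

lemma stair_sum_bracket:
  fixes H k j :: int
  assumes "0 < b" "e \<le> b" "H = int h + 1" "k = int e - 1"
    and "int r = H + int b * H * (H - 1) div 2 + k * H + j" "0 < j" "j \<le> H"
  shows "stair_sum b (h * b + e) < r \<and> r \<le> stair_sum b (Suc (h * b + e))"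
proof -
  have "2 * (int b * H * (H - 1) div 2) = int b * H * (H - 1)" by simp
  then have r: "2 * int r = 2 * H + int b * H * (H - 1) + 2 * k * H + 2 * j" using assms(5) by linarith
  have "int (2 * stair_sum b (h * b + e)) = int (b * h * (h + 1) + 2 * e * (h + 1))"
    using stair_sum_add[OF assms(1,2)] stair_sum_mult[OF assms(1)] by simp
  then have "2 * int (stair_sum b (h * b + e)) = int b * int h * (int h + 1) + 2 * int e * (int h + 1)"
    by (simp add: algebra_simps)
  also have "\<dots> = 2 * int r - 2 * j" using r assms(3,4) by (simp add: algebra_simps)
  finally have sum: "int (stair_sum b (h * b + e)) = int r - j" by linarith
  have "h \<le> (h * b + e) div b" using assms(1) by (metis div_le_mono div_mult_self_is_m le_add1)
  with sum assms(3,6,7) show ?thesis by simp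
qed

lemma strict_mono_bracket_unique:
  fixes f :: "nat \<Rightarrow> 'a::linorder"
  assumes "strict_mono f" "f s < r" "r \<le> f (Suc s)" "f t < r" "r \<le> f (Suc t)"
  shows "s = t"
proof (rule ccontr)
  assume "s \<noteq> t"
  then have "Suc s \<le> t \<or> Suc t \<le> s" by linarith
  then have "f (Suc s) \<le> f t \<or> f (Suc t) \<le> f s" using strict_mono_less_eq[OF assms(1)] by blast
  with assms(2-5) show False by auto
qed

section \<open>Amenable sets between two staircases\<close>

lemma shadow_intervalD:
  assumes "shadow a b m M = {m..m + t}" "z \<le> t"
  shows "m + z \<in> M"
proof -
  have "m + z \<in> shadow a b m M" using assms by simp
  then show ?thesis unfolding shadow_def by simp
qed

lemma amenable_sub_staircase:
  assumes "0 < a" "0 < b" "amenable (Ssg a b) m r M" "t + 1 < a + b"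
    and "shadow a b m M \<subseteq> {m..m + t}" "x \<in> M"
  shows "x - m \<in> staircase a b (t + 1)"
  using assms(6)
proof (induction x rule: less_induct)
  case (less x)
  have "m \<le> x" using amenableD(5)[OF assms(3) less.prems] .
  show ?case
  proof (cases "x < m + a + b")
    case True
    with assms(5) less.prems \<open>m \<le> x\<close> have "0 * (a + b) \<le> x - m \<and> x - m < 0 * a + (t + 1)"
      by (auto simp: shadow_def)
    then show ?thesis unfolding staircase_def by blast
  next
    case False
    show ?thesis
    proof (rule staircase_if_diffs_mem)
      fix g assume g: "a \<le> g" "g \<le> a + b"
      then have "g \<in> Ssg a b" by (auto simp: mem_Ssg_iff intro: exI[of _ 1])
      with g False have "x - g \<in> M"
        by (intro amenable_Ssg_closed[OF assms(1-3) less.prems]) auto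
      with g assms(1) False have "x - g - m \<in> staircase a b (t + 1)" by (intro less.IH) auto
      then show "x - m - g \<in> staircase a b (t + 1)" by (simp add: diff_commute add.commute)
    qed (use False assms(4) in auto)
  qed
qed

lemma amenable_insert:
  assumes "amenable S m r M" "s \<in> S" "s \<notin> M" "m \<le> s"
    and "\<And>\<alpha>. \<alpha> \<in> Dset S s \<Longrightarrow> m \<le> \<alpha> \<Longrightarrow> \<alpha> \<in> insert s M"
  shows "amenable S m (r + 1) (insert s M)"
  unfolding amenable_def
proof (intro conjI ballI impI)
  show "finite (insert s M)" "card (insert s M) = r + 1"
    using amenableD(1,2)[OF assms(1)] assms(3) by simp_all
  show "insert s M \<subseteq> S" "m \<in> insert s M" "2 * conductor S \<le> m + 1"
    using amenableD(3,4,6)[OF assms(1)] assms(2) by simp_all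
  show "m \<le> x" if "x \<in> insert s M" for x
    using that amenableD(5)[OF assms(1)] assms(4) by blast
  show "\<alpha> \<in> insert s M" if "x \<in> insert s M" "\<alpha> \<in> Dset S x" "m \<le> \<alpha>" for x \<alpha>
    using that amenableD(7)[OF assms(1)] assms(5) by blast
qed

lemma amenable_insert_least_gap:
  assumes "0 < a" "0 < b" "amenable (Ssg a b) m r M"
    and "y \<in> staircase a b n" "m + y \<notin> M"
    and least: "\<And>z. z < y \<Longrightarrow> z \<in> staircase a b n \<Longrightarrow> m + z \<in> M"
  shows "amenable (Ssg a b) m (r + 1) (insert (m + y) M)"
proof (rule amenable_insert[OF assms(3) _ assms(5)])
  show "m + y \<in> Ssg a b" by (rule amenable_Ssg_above[OF assms(1-3)]) simp
  fix \<alpha> assume "\<alpha> \<in> Dset (Ssg a b) (m + y)" "m \<le> \<alpha>"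
  then have \<alpha>: "\<alpha> \<le> m + y" "m + y - \<alpha> \<in> Ssg a b" "m \<le> \<alpha>" unfolding Dset_def by auto
  show "\<alpha> \<in> insert (m + y) M"
  proof (cases "\<alpha> = m + y")
    case False
    have "y - (m + y - \<alpha>) \<in> staircase a b n"
      using \<alpha> by (intro staircase_diff_mem[OF assms(4)]) auto
    moreover have "y - (m + y - \<alpha>) = \<alpha> - m" using \<alpha> by simp
    ultimately have "m + (\<alpha> - m) \<in> M" using False \<alpha> by (intro least) auto
    with \<alpha> show ?thesis by simp
  qed simp
qed simp

lemma finite_wagonJ: "finite (wagonJ a b m M)"
  by (rule finite_subset[of _ "{..<a}"]) (auto simp: wagonJ_def)

lemma wagonJ_Max_ge:
  assumes "m + b + j \<in> M" "j < a"
  shows "j \<le> Max (wagonJ a b m M)"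
  using assms by (intro Max_ge[OF finite_wagonJ]) (auto simp: wagonJ_def intro!: bexI[of _ "m + b + j"])

lemma pivot_residue:
  assumes "finite M" "is_pivot a b m M P" "m + b \<le> P"
  shows "Max (wagonJ a b m M) < a \<and> int a dvd int P - int (m + b) - int (Max (wagonJ a b m M))"
proof -
  have J: "wagonJ a b m M \<noteq> {}" and P: "P = Max (wagon a b m M)"
    using assms(2,3) unfolding is_pivot_def by auto
  have "Max (wagonJ a b m M) \<in> wagonJ a b m M" using finite_wagonJ J by (rule Max_in)
  then obtain x q where "x \<in> M" "x = m + b + q * a + Max (wagonJ a b m M)" and j0: "Max (wagonJ a b m M) < a"
    unfolding wagonJ_def by auto
  then have "x \<in> wagon a b m M" unfolding wagon_def by (auto intro!: exI[of _ "int q"])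
  moreover have "finite (wagon a b m M)" using assms(1) by (rule finite_subset[rotated]) (auto simp: wagon_def)
  ultimately have "P \<in> wagon a b m M" unfolding P by (intro Max_in) auto
  with j0 show ?thesis unfolding wagon_def by (auto simp: dvd_def algebra_simps)
qed

lemma pivot_plus_a_outside_staircase:
  assumes "0 < a" "finite M" "is_pivot a b m M P" "m + t \<in> M" "t < a + b"
    and "y \<in> staircase a b t" "a + b \<le> y"
  shows "P + a \<noteq> m + y"
proof
  assume Py: "P + a = m + y"
  obtain q where q: "q * (a + b) \<le> y" "y < q * a + t" using assms(6) unfolding staircase_def by auto
  have "1 \<le> q"
  proof (rule ccontr)
    assume "\<not> 1 \<le> q"
    then have "q = 0" by simp
    with q assms(5,7) show False by simp
  qed
  then have "b \<le> q * b" by simp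
  moreover have "q * (a + b) = q * a + q * b" by (simp add: algebra_simps)
  ultimately have bt: "b < t" "q * a + b \<le> y" using q by linarith+
  define j0 where "j0 = Max (wagonJ a b m M)"
  have "m + b \<le> P" using Py assms(7) by simp
  then have j0: "j0 < a" "int a dvd int P - int (m + b) - int j0"
    using pivot_residue[OF assms(2,3)] unfolding j0_def by auto
  have "m + b + (t - b) \<in> M" "t - b < a" using assms(4,5) bt by auto
  then have "t - b \<le> j0" unfolding j0_def by (rule wagonJ_Max_ge)
  define e where "e = y - q * a - b"
  \<comment> \<open>\<open>e\<close> is congruent to \<open>j0\<close> modulo \<open>a\<close>, yet \<open>0 \<le> e < t - b \<le> j0 < a\<close>.\<close>
  have "int P - int (m + b) - int j0 = (int q - 1) * int a + (int e - int j0)"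
    using Py bt(2) \<open>1 \<le> q\<close> unfolding e_def by (simp add: algebra_simps of_nat_diff)
  with j0(2) have "int a dvd int j0 - int e"
    by (metis dvd_add_right_iff dvd_minus_iff dvd_triv_right minus_diff_eq)
  moreover have "e < t - b" using q(2) bt unfolding e_def by linarith
  with \<open>t - b \<le> j0\<close> j0(1) have "0 < int j0 - int e" "int j0 - int e < int a" by linarith+
  ultimately show False using zdvd_not_zless by blast
qed

lemma ordered_amenable_staircase_subset:
  assumes "0 < a" "0 < b" "ordered_amenable a b (Ssg a b) m r M"
    and "t + 1 < a + b" "shadow a b m M = {m..m + t}" "y \<in> staircase a b t"
  shows "m + y \<in> M"
proof (rule ccontr)
  assume "m + y \<notin> M"
  with assms(6) obtain y0 where y0: "y0 \<in> staircase a b t" "m + y0 \<notin> M"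
    and least: "\<And>z. z < y0 \<Longrightarrow> z \<in> staircase a b t \<Longrightarrow> m + z \<in> M"
    using exists_least_iff[of "\<lambda>y. y \<in> staircase a b t \<and> m + y \<notin> M"] by blast
  have am: "amenable (Ssg a b) m r M" using assms(3) by (simp add: ordered_amenable_def)
  obtain P where P: "is_pivot a b m M P"
    and maximal: "\<And>s. s \<in> Ssg a b - M \<Longrightarrow> amenable (Ssg a b) m (r + 1) (insert s M) \<Longrightarrow>
                   shadow a b m (insert s M) = shadow a b m M \<Longrightarrow> s = P + a"
    using assms(3) unfolding ordered_amenable_def by blast
  note shadow_mem = shadow_intervalD[OF assms(5)]
  have "a + b \<le> y0"
  proof (rule ccontr)
    assume "\<not> a + b \<le> y0"
    moreover obtain q where "q * (a + b) \<le> y0" "y0 < q * a + t" using y0(1) unfolding staircase_def by auto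
    ultimately have "y0 < t" by (cases q) auto
    with y0(2) shadow_mem show False by simp
  qed
  have "m + y0 \<in> Ssg a b - M" using amenable_Ssg_above[OF assms(1,2) am] y0(2) by simp
  moreover have "amenable (Ssg a b) m (r + 1) (insert (m + y0) M)"
    using amenable_insert_least_gap[OF assms(1,2) am y0 least] .
  moreover have "shadow a b m (insert (m + y0) M) = shadow a b m M"
    using \<open>a + b \<le> y0\<close> unfolding shadow_def by auto
  ultimately have "m + y0 = P + a" by (rule maximal)
  moreover have "P + a \<noteq> m + y0"
    using pivot_plus_a_outside_staircase[OF assms(1) amenableD(1)[OF am] P shadow_mem[OF order_refl] _ y0(1)]
      assms(4) \<open>a + b \<le> y0\<close> by simp
  ultimately show False by simp
qed

lemma ordered_amenable_card_bounds:
  assumes "0 < a" "0 < b" "ordered_amenable a b (Ssg a b) m r M"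
    and "t + 1 < a + b" "shadow a b m M = {m..m + t}"
  shows "stair_sum b t < r \<and> r \<le> stair_sum b (Suc t)"
proof
  have am: "amenable (Ssg a b) m r M" using assms(3) by (simp add: ordered_amenable_def)
  note fin = amenableD(1)[OF am] and card = amenableD(2)[OF am]
  have "t \<notin> staircase a b t" using staircase_corner_notin[of t a b 0] assms(4) by simp
  then have "card (insert (m + t) ((+) m ` staircase a b t)) = card (staircase a b t) + 1"
    using finite_staircase[OF assms(2)] by (subst card_insert_disjoint) (auto simp: card_image)
  moreover have "insert (m + t) ((+) m ` staircase a b t) \<subseteq> M"
    using shadow_intervalD[OF assms(5), of t] ordered_amenable_staircase_subset[OF assms] by blast
  then have "card (insert (m + t) ((+) m ` staircase a b t)) \<le> r"
    using card_mono[OF fin] card by blast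
  ultimately show "stair_sum b t < r" using card_staircase[OF assms(1,2)] assms(4) by simp
  have "inj_on (\<lambda>x. x - m) M"
    using amenableD(5)[OF am] by (intro inj_onI) (metis diff_add_inverse2 le_add_diff_inverse2)
  then have "r = card ((\<lambda>x. x - m) ` M)" using card by (simp add: card_image)
  also have "\<dots> \<le> card (staircase a b (t + 1))"
    using amenable_sub_staircase[OF assms(1,2) am assms(4)] assms(5) finite_staircase[OF assms(2)]
    by (intro card_mono) auto
  finally show "r \<le> stair_sum b (Suc t)" using card_staircase[OF assms(1,2)] assms(4) by simp
qed

theorem corollary4p19:
  fixes a b m r :: nat and k j :: int and M :: "nat set"
  assumes "0 < b" and "b < a"
    and "2 * conductor (Ssg a b) \<le> m + 1"
    and "0 < r"
    and "int r = hfun b r + int b * hfun b r * (hfun b r - 1) div 2 + k * hfun b r + j"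
    and "-1 \<le> k" and "k \<le> int b - 1"
    and "0 < j" and "j \<le> hfun b r"
    and "ordered_amenable a b (Ssg a b) m r M"
  shows "int (card (M \<inter> {m..<m+a+b})) = (hfun b r - 1) * int b + k + 2"
proof -
  obtain t where t: "t + 1 < a + b" "shadow a b m M = {m..m + t}"
    using assms(10) unfolding ordered_amenable_def by blast
  have bounds: "stair_sum b t < r \<and> r \<le> stair_sum b (Suc t)"
    using ordered_amenable_card_bounds[OF _ assms(1,10) t] assms(1,2) by simp
  define h e where "h = nat (hfun b r - 1)" and "e = nat (k + 1)"
  have H: "hfun b r = int h + 1" and k: "k = int e - 1" and "e \<le> b"
    using assms(6-9) unfolding h_def e_def by auto
  have "stair_sum b (h * b + e) < r \<and> r \<le> stair_sum b (Suc (h * b + e))"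
    using stair_sum_bracket[OF assms(1) \<open>e \<le> b\<close> H k] assms(5,8,9) by blast
  with bounds have "t = h * b + e" using strict_mono_bracket_unique[OF strict_mono_stair_sum] by blast
  moreover have "M \<inter> {m..<m+a+b} = {m..m + t}" using t(2) unfolding shadow_def .
  ultimately show ?thesis using H k by (simp add: algebra_simps)
qed

end
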